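(* Let $D$ be a finite digraph and let $T$ be a maximum induced acyclic subdigraph of $D$ (i.e., $V(T)$ is a vertex set of maximum size such that $D[V(T)]$ is acyclic). Then there exists a path partition $\mathcal{P}$ of $D$ orthogonal to $T$, that is, every path of $\mathcal{P}$ contains exactly one vertex of $T$.
   Context: A path partition of $D$ is a collection of vertex-disjoint directed paths of $D$ covering $V(D)$. *)

theory Defs
  imports Main
begin

definition digraph :: "'a set \<Rightarrow> ('a \<times> 'a) set \<Rightarrow> bool" where
  "digraph V E \<longleftrightarrow> finite V \<and> E \<subseteq> V \<times> V \<and> (\<forall>v. (v, v) \<notin> E)"

definition induced_acyclic :: "('a \<times> 'a) set \<Rightarrow> 'a set \<Rightarrow> bool" where
  "induced_acyclic E S \<longleftrightarrow> acyclic (Restr E S)"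

definition max_induced_acyclic :: "'a set \<Rightarrow> ('a \<times> 'a) set \<Rightarrow> 'a set \<Rightarrow> bool" where
  "max_induced_acyclic V E T \<longleftrightarrow> T \<subseteq> V \<and> induced_acyclic E T \<and>
     (\<forall>S. S \<subseteq> V \<and> induced_acyclic E S \<longrightarrow> card S \<le> card T)"

definition dipath :: "'a set \<Rightarrow> ('a \<times> 'a) set \<Rightarrow> 'a list \<Rightarrow> bool" where
  "dipath V E p \<longleftrightarrow> p \<noteq> [] \<and> distinct p \<and> set p \<subseteq> V \<and>
     (\<forall>i. Suc i < length p \<longrightarrow> (p ! i, p ! Suc i) \<in> E)"

definition path_partition :: "'a set \<Rightarrow> ('a \<times> 'a) set \<Rightarrow> 'a list set \<Rightarrow> bool" where
  "path_partition V E P \<longleftrightarrow> (\<forall>p\<in>P. dipath V E p) \<and>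
     (\<forall>p\<in>P. \<forall>q\<in>P. p \<noteq> q \<longrightarrow> set p \<inter> set q = {}) \<and>
     (\<Union>p\<in>P. set p) = V"

definition orthogonal :: "'a list set \<Rightarrow> 'a set \<Rightarrow> bool" where
  "orthogonal P T \<longleftrightarrow> (\<forall>p\<in>P. card (set p \<inter> T) = 1)"

end

theory Submission
  imports Defs
begin

text \<open>
  A set of more than \<open>card T\<close> vertices is not acyclic, and a cycle cannot lie inside \<open>T\<close>,
  so it contains an arc leaving a vertex outside \<open>T\<close>. Apply this to the first vertices of
  a path partition in which every path meets \<open>T\<close> at most once, as in the Gallai--Milgram
  theorem: as long as there are more than \<open>card T\<close> paths, some first vertex \<open>x \<notin> T\<close>
  has an arc to another first vertex, and removing \<open>x\<close>, merging recursively and putting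
  \<open>x\<close> back in front of a path yields one path fewer. As \<open>x \<notin> T\<close>, every path still
  meets \<open>T\<close> at most once. Starting from the partition into single vertices we end with at
  most \<open>card T\<close> paths; they cover \<open>T\<close>, so each of them meets \<open>T\<close> exactly once.
\<close>

lemma card_insert_Diff_singleton:
  "finite A \<Longrightarrow> a \<in> A \<Longrightarrow> b \<notin> A - {a} \<Longrightarrow> card (insert b (A - {a})) = card A"
  by (metis card_Suc_Diff1 card_insert_disjoint finite_Diff)

lemma subset_misses_at_most_one:
  assumes "finite B" "A \<subseteq> B" "card B \<le> Suc (card A)" "a \<in> B" "b \<in> B" "a \<noteq> b"
  shows "a \<in> A \<or> b \<in> A"
proof (rule ccontr)
  assume "\<not> ?thesis"
  with assms(2) have "A \<subseteq> B - {a, b}"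
    by blast
  then have "card A \<le> card (B - {a, b})"
    using assms(1) by (intro card_mono) auto
  also have "\<dots> = card B - 2"
    using assms(1,4-6) by (simp add: card_Diff_subset)
  finally have "card A \<le> card B - 2" .
  moreover have "2 \<le> card B"
    using card_mono[OF assms(1), of "{a, b}"] assms(4-6) by simp
  ultimately show False
    using assms(3) by linarith
qed

lemma inj_on_image_hits_one_of_two:
  assumes "inj_on f Q" and "finite B" and "f ` Q \<subseteq> B" and "card B \<le> Suc (card Q)"
    and "u \<in> B" and "v \<in> B" and "u \<noteq> v"
  obtains q where "q \<in> Q" and "f q \<in> {u, v}" and "u \<notin> f ` (Q - {q})"
proof (cases "u \<in> f ` Q")
  case True
  then obtain q where "q \<in> Q" "f q = u"
    by (metis imageE)
  moreover from this have "u \<notin> f ` (Q - {q})"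
    using assms(1) by (auto simp: inj_on_def)
  ultimately show ?thesis
    using that by blast
next
  case False
  have "v \<in> f ` Q"
    using subset_misses_at_most_one[OF assms(2,3) _ assms(5-7)] card_image[OF assms(1)] assms(4)
      False by simp
  then obtain q where "q \<in> Q" "f q = v"
    by (metis imageE)
  then show ?thesis
    using that False by blast
qed

lemma trancl_Restr_Domain:
  assumes "(a, b) \<in> R\<^sup>+" and "b \<in> Domain R"
  shows "(a, b) \<in> (Restr R (Domain R))\<^sup>+"
  using assms
proof (induction rule: converse_trancl_induct)
  case (base a)
  then show ?case by blast
next
  case (step a c)
  have "c \<in> Domain (R\<^sup>+)"
    using step.hyps(2) by blast
  then have "(a, c) \<in> Restr R (Domain R)"
    using step.hyps(1) by auto
  then show ?case
    using step.IH[OF step.prems] by (rule trancl_into_trancl2)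
qed

lemma not_acyclic_arc_from_outside:
  assumes "acyclic (Restr E T)" and "\<not> acyclic (Restr E S)"
  shows "\<exists>x\<in>S - T. \<exists>y\<in>S. (x, y) \<in> E"
proof (rule ccontr)
  let ?R = "Restr E S"
  assume "\<not> ?thesis"
  then have "Restr ?R (Domain ?R) \<subseteq> Restr E T"
    by blast
  then have "acyclic (Restr ?R (Domain ?R))"
    using assms(1) acyclic_subset by blast
  moreover obtain z where "(z, z) \<in> ?R\<^sup>+"
    using assms(2) unfolding acyclic_def by blast
  ultimately show False
    unfolding acyclic_def by (metis DomainI trancl_domain trancl_Restr_Domain)
qed

lemma dipath_Cons:
  "dipath V E (x # p) \<longleftrightarrow> x \<in> V \<and> x \<notin> set p \<and> (p = [] \<or> (x, hd p) \<in> E \<and> dipath V E p)"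
proof -
  have "(\<forall>i. Suc i < length (x # p) \<longrightarrow> ((x # p) ! i, (x # p) ! Suc i) \<in> E) \<longleftrightarrow>
        (p \<noteq> [] \<longrightarrow> (x, hd p) \<in> E) \<and> (\<forall>i. Suc i < length p \<longrightarrow> (p ! i, p ! Suc i) \<in> E)"
    by (auto simp: hd_conv_nth nth_Cons split: nat.splits)
  then show ?thesis
    unfolding dipath_def by auto
qed

lemma dipath_subset:
  "dipath V E p \<Longrightarrow> set p \<subseteq> W \<Longrightarrow> dipath W E p"
  unfolding dipath_def by blast

lemma path_partition_dipath: "path_partition V E P \<Longrightarrow> p \<in> P \<Longrightarrow> dipath V E p"
  unfolding path_partition_def by blast

lemma path_partition_disjoint:
  "path_partition V E P \<Longrightarrow> p \<in> P \<Longrightarrow> q \<in> P \<Longrightarrow> p \<noteq> q \<Longrightarrow> set p \<inter> set q = {}"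
  unfolding path_partition_def by blast

lemma path_partition_set_subset: "path_partition V E P \<Longrightarrow> p \<in> P \<Longrightarrow> set p \<subseteq> V"
  unfolding path_partition_def by blast

lemma path_partition_Nil_notin: "path_partition V E P \<Longrightarrow> [] \<notin> P"
  unfolding path_partition_def dipath_def by blast

lemma path_partition_inj_on_hd:
  assumes "path_partition V E P"
  shows "inj_on hd P"
proof (rule inj_onI)
  fix p q
  assume "p \<in> P" "q \<in> P" "hd p = hd q"
  moreover from this have "hd p \<in> set p \<inter> set q"
    using path_partition_Nil_notin[OF assms] by (metis IntI list.set_sel(1))
  ultimately show "p = q"
    using path_partition_disjoint[OF assms] by blast
qed

lemma path_partition_hd_subset: "path_partition V E P \<Longrightarrow> hd ` P \<subseteq> V"
  by (metis hd_in_set image_subsetI path_partition_Nil_notin path_partition_set_subset subsetD)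

lemma path_partition_finite: "finite V \<Longrightarrow> path_partition V E P \<Longrightarrow> finite P"
  by (metis finite_imageD finite_subset path_partition_hd_subset path_partition_inj_on_hd)

lemma path_partition_singletons: "path_partition V E ((\<lambda>v. [v]) ` V)"
  unfolding path_partition_def dipath_def by auto

lemma path_partition_Diff:
  assumes "path_partition V E P" and "p \<in> P"
  shows "path_partition (V - set p) E (P - {p})"
proof -
  have "set q \<subseteq> V - set p" if "q \<in> P - {p}" for q
    using that assms path_partition_disjoint path_partition_set_subset by fastforce
  moreover have "(\<Union>q\<in>P - {p}. set q) = V - set p"
    using assms calculation unfolding path_partition_def by blast
  ultimately show ?thesis
    using assms dipath_subset unfolding path_partition_def by (metis DiffD1)
qed

lemma path_partition_insert:
  assumes "path_partition W E Q" and "dipath V E p" and "set p \<inter> W = {}"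
  shows "path_partition (W \<union> set p) E (insert p Q)"
proof -
  have "set q \<inter> set p = {}" if "q \<in> Q" for q
    using assms(1,3) that path_partition_set_subset by fastforce
  moreover have "dipath (W \<union> set p) E q" if "q \<in> insert p Q" for q
    using that assms(1,2) dipath_subset path_partition_dipath path_partition_set_subset
    by (metis Un_upper2 insert_iff le_supI1)
  ultimately show ?thesis
    using assms(1) unfolding path_partition_def by (auto simp del: set_simps)
qed

lemma path_partition_Cons_notin:
  "path_partition W E Q \<Longrightarrow> x \<notin> W \<Longrightarrow> x # q \<notin> Q"
  using path_partition_set_subset by fastforce

lemma path_partition_prepend:
  assumes "path_partition W E Q" and "q \<in> Q" and "x \<notin> W" and "(x, hd q) \<in> E"
  shows "path_partition (insert x W) E (insert (x # q) (Q - {q}))"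
proof -
  have q: "dipath W E q" "set q \<subseteq> W" "q \<noteq> []"
    using assms(1,2) path_partition_dipath path_partition_set_subset path_partition_Nil_notin
    by blast+
  then have "dipath (insert x W) E (x # q)"
    using assms(3,4) dipath_subset[of W E q "insert x W"] by (auto simp: dipath_Cons)
  moreover have "set (x # q) \<inter> (W - set q) = {}" "W - set q \<union> set (x # q) = insert x W"
    using assms(3) q(2) by auto
  ultimately show ?thesis
    using path_partition_insert[OF path_partition_Diff[OF assms(1,2)]] by metis
qed

lemma path_partition_tl:
  assumes "path_partition V E P" and "x # p \<in> P" and "p \<noteq> []"
  shows "path_partition (V - {x}) E (insert p (P - {x # p}))"
    and "finite P \<Longrightarrow> card (insert p (P - {x # p})) = card P"
proof -
  have xp: "dipath V E (x # p)" "set (x # p) \<subseteq> V"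
    using assms(1,2) path_partition_dipath path_partition_set_subset by blast+
  then have "dipath V E p" "x \<notin> set p"
    using assms(3) by (auto simp: dipath_Cons)
  moreover have "set p \<inter> (V - set (x # p)) = {}" "V - set (x # p) \<union> set p = V - {x}"
    using xp(2) calculation(2) by auto
  ultimately show "path_partition (V - {x}) E (insert p (P - {x # p}))"
    using path_partition_insert[OF path_partition_Diff[OF assms(1,2)]] by metis
  have notin: "p \<notin> P - {x # p}"
  proof
    assume "p \<in> P - {x # p}"
    then have "set p \<inter> set (x # p) = {}"
      using assms(1,2) path_partition_disjoint by blast
    with assms(3) show False
      by (cases p) auto
  qed
  show "card (insert p (P - {x # p})) = card P" if "finite P"
    using card_insert_Diff_singleton[OF that assms(2) notin] .
qed

lemma path_partition_arc_between_heads: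
  assumes "path_partition V E P" and "\<forall>v. (v, v) \<notin> E"
    and "x \<in> hd ` P" and "y \<in> hd ` P" and "(x, y) \<in> E"
  obtains p py where "x # p \<in> P" and "py \<in> P" and "x # p \<noteq> py" and "hd py = y"
proof -
  obtain p where "x # p \<in> P"
    using assms(3) path_partition_Nil_notin[OF assms(1)] by (metis image_iff list.collapse)
  moreover obtain py where "py \<in> P" "hd py = y"
    using assms(4) by blast
  moreover from this have "x # p \<noteq> py"
    using assms(2,5) by auto
  ultimately show ?thesis
    using that by blast
qed

text \<open>
  \<open>Q\<close> has one path fewer than the partition left after deleting \<open>x\<close>, so its first vertices
  miss at most one of \<open>hd p\<close> and \<open>hd py\<close>. Putting \<open>x\<close> in front of \<open>hd p\<close> whenever
  possible keeps all first vertices inside \<open>hd ` P\<close>.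
\<close>

lemma path_partition_reattach:
  assumes pp: "path_partition V E P" and "finite P" and px: "x # p \<in> P" and "p \<noteq> []"
    and py: "py \<in> P" "x # p \<noteq> py" "(x, hd py) \<in> E"
    and Q: "path_partition (V - {x}) E Q" "card Q = card P - 1"
      "hd ` Q \<subseteq> hd ` insert p (P - {x # p})"
  obtains q where "q \<in> Q" and "(x, hd q) \<in> E" and "hd ` (Q - {q}) \<subseteq> hd ` P"
proof -
  let ?P' = "insert p (P - {x # p})"
  have "0 < card P"
    using assms(2) px card_gt_0_iff by blast
  moreover have "card (hd ` ?P') = card P"
    using card_image[OF path_partition_inj_on_hd[OF path_partition_tl(1)[OF pp px assms(4)]]]
      path_partition_tl(2)[OF pp px assms(4,2)] by simp
  ultimately have card: "card (hd ` ?P') \<le> Suc (card Q)"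
    using Q(2) by simp
  have "py \<noteq> []"
    using py(1) path_partition_Nil_notin[OF pp] by blast
  then have "hd py \<notin> set (x # p)"
    using path_partition_disjoint[OF pp px py(1,2)] hd_in_set by blast
  then have neq: "hd p \<noteq> hd py"
    using hd_in_set[OF assms(4)] by auto
  have fin: "finite (hd ` ?P')" and p_hd: "hd p \<in> hd ` ?P'" and py_hd: "hd py \<in> hd ` ?P'"
    using assms(2) py(1,2) by auto
  obtain q where q: "q \<in> Q" "hd q \<in> {hd p, hd py}" "hd p \<notin> hd ` (Q - {q})"
    by (rule inj_on_image_hits_one_of_two[OF path_partition_inj_on_hd[OF Q(1)] fin Q(3) card
          p_hd py_hd neq])
  have "(x, hd p) \<in> E"
    using path_partition_dipath[OF pp px] assms(4) by (simp add: dipath_Cons)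
  with q(2) py(3) have "(x, hd q) \<in> E"
    by auto
  moreover have "hd ` (Q - {q}) \<subseteq> hd ` P"
  proof
    fix v
    assume v: "v \<in> hd ` (Q - {q})"
    then have "v \<noteq> hd p"
      using q(3) by metis
    moreover have "v \<in> hd ` ?P'"
      using v Q(3) by blast
    ultimately show "v \<in> hd ` P"
      by auto
  qed
  ultimately show ?thesis
    using that q(1) by blast
qed

definition meets_at_most_once :: "'a list set \<Rightarrow> 'a set \<Rightarrow> bool" where
  "meets_at_most_once P T \<longleftrightarrow> (\<forall>p\<in>P. card (set p \<inter> T) \<le> 1)"

lemma meets_at_most_once_Diff: "meets_at_most_once P T \<Longrightarrow> meets_at_most_once (P - A) T"
  unfolding meets_at_most_once_def by blast

lemma meets_at_most_once_tl:
  assumes "meets_at_most_once P T" and "x # p \<in> P"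
  shows "meets_at_most_once (insert p (P - {x # p})) T"
proof -
  have "card (set p \<inter> T) \<le> card (set (x # p) \<inter> T)"
    by (intro card_mono) auto
  then show ?thesis
    using assms unfolding meets_at_most_once_def by fastforce
qed

lemma path_partition_prepend_outside:
  assumes "path_partition (V - {x}) E Q" and "q \<in> Q" and "x \<in> V" and "x \<notin> T"
    and "(x, hd q) \<in> E" and "meets_at_most_once Q T" and "finite Q"
  shows "path_partition V E (insert (x # q) (Q - {q}))"
    and "meets_at_most_once (insert (x # q) (Q - {q})) T"
    and "card (insert (x # q) (Q - {q})) = card Q"
proof -
  show "path_partition V E (insert (x # q) (Q - {q}))"
    using path_partition_prepend[OF assms(1,2) _ assms(5)] assms(3) by (simp add: insert_absorb)
  show "meets_at_most_once (insert (x # q) (Q - {q})) T"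
    using assms(2,4,6) unfolding meets_at_most_once_def by simp
  show "card (insert (x # q) (Q - {q})) = card Q"
    using card_insert_Diff_singleton[OF assms(7,2)] path_partition_Cons_notin[OF assms(1)] by blast
qed

lemma path_partition_fewer_paths:
  assumes "finite V" and "\<forall>v. (v, v) \<notin> E"
    and "\<And>S. S \<subseteq> V \<Longrightarrow> m < card S \<Longrightarrow> \<exists>x\<in>S - T. \<exists>y\<in>S. (x, y) \<in> E"
    and "path_partition V E P" and "meets_at_most_once P T" and "m < card P"
  shows "\<exists>Q. path_partition V E Q \<and> meets_at_most_once Q T \<and> card Q = card P - 1 \<and>
           hd ` Q \<subseteq> hd ` P"
  using assms
proof (induction "card V" arbitrary: V P rule: less_induct)
  case less
  note pp = \<open>path_partition V E P\<close>
  have fP: "finite P"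
    using less.prems(1) pp path_partition_finite by blast
  have "card (hd ` P) = card P"
    using card_image path_partition_inj_on_hd pp by blast
  then obtain x y where x: "x \<in> hd ` P" "x \<notin> T" and y: "y \<in> hd ` P" and xy: "(x, y) \<in> E"
    using less.prems(3)[of "hd ` P"] less.prems(6) path_partition_hd_subset[OF pp] by auto
  obtain p py where px: "x # p \<in> P" and py: "py \<in> P" "x # p \<noteq> py" "hd py = y"
    by (rule path_partition_arc_between_heads[OF pp less.prems(2) x(1) y xy])
  have xV: "x \<in> V"
    using x(1) path_partition_hd_subset[OF pp] by blast
  have "\<exists>Q q. path_partition (V - {x}) E Q \<and> meets_at_most_once Q T \<and> card Q = card P - 1 \<and>
          q \<in> Q \<and> (x, hd q) \<in> E \<and> hd ` (Q - {q}) \<subseteq> hd ` P"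
  proof (cases "p = []")
    case True
    have "path_partition (V - {x}) E (P - {[x]})"
      using path_partition_Diff[OF pp px[unfolded True]] by simp
    moreover have "card (P - {[x]}) = card P - 1" and "py \<in> P - {[x]}"
      using fP px py(1,2) True by simp_all
    moreover have "hd ` (P - {[x]} - {py}) \<subseteq> hd ` P"
      by blast
    ultimately show ?thesis
      using meets_at_most_once_Diff[OF less.prems(5)] xy py(3) by blast
  next
    case False
    let ?P' = "insert p (P - {x # p})"
    have "\<exists>Q. path_partition (V - {x}) E Q \<and> meets_at_most_once Q T \<and>
        card Q = card ?P' - 1 \<and> hd ` Q \<subseteq> hd ` ?P'"
    proof (rule less.hyps[OF card_Diff1_less[OF less.prems(1) xV] _ less.prems(2) _
          path_partition_tl(1)[OF pp px False] meets_at_most_once_tl[OF less.prems(5) px]])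
      show "finite (V - {x})"
        using less.prems(1) by simp
      show "m < card ?P'"
        using path_partition_tl(2)[OF pp px False fP] less.prems(6) by simp
      show "\<exists>u\<in>S - T. \<exists>v\<in>S. (u, v) \<in> E" if "S \<subseteq> V - {x}" and "m < card S" for S
        using less.prems(3) that by blast
    qed
    then obtain Q where Q: "path_partition (V - {x}) E Q" "meets_at_most_once Q T"
        "card Q = card P - 1" "hd ` Q \<subseteq> hd ` ?P'"
      using path_partition_tl(2)[OF pp px False fP] by auto
    obtain q where "q \<in> Q" "(x, hd q) \<in> E" "hd ` (Q - {q}) \<subseteq> hd ` P"
      using path_partition_reattach[OF pp fP px False py(1,2) _ Q(1,3,4)] xy py(3) by blast
    with Q(1-3) show ?thesis
      by blast
  qed
  then obtain Q q where Q: "path_partition (V - {x}) E Q" "meets_at_most_once Q T"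
      "card Q = card P - 1" "q \<in> Q" "(x, hd q) \<in> E" "hd ` (Q - {q}) \<subseteq> hd ` P"
    by blast
  have "finite Q"
    using Q(1) less.prems(1) path_partition_finite by blast
  note prepended = path_partition_prepend_outside[OF Q(1,4) xV x(2) Q(5,2) this]
  have "hd ` insert (x # q) (Q - {q}) \<subseteq> hd ` P"
    using Q(6) x(1) by simp
  with prepended Q(3) show ?case
    by (intro exI[of _ "insert (x # q) (Q - {q})"]) simp
qed

text \<open>For \<open>T = {}\<close> and \<open>m\<close> the independence number this is the Gallai--Milgram theorem.\<close>

lemma path_partition_at_most_paths:
  assumes "finite V" and "\<forall>v. (v, v) \<notin> E"
    and "\<And>S. S \<subseteq> V \<Longrightarrow> m < card S \<Longrightarrow> \<exists>x\<in>S - T. \<exists>y\<in>S. (x, y) \<in> E"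
  shows "\<exists>Q. path_partition V E Q \<and> meets_at_most_once Q T \<and> card Q \<le> m"
proof -
  have "\<exists>Q. path_partition V E Q \<and> meets_at_most_once Q T \<and> card Q \<le> m"
    if "path_partition V E P" and "meets_at_most_once P T" for P
    using that
  proof (induction "card P" arbitrary: P rule: less_induct)
    case less
    show ?case
    proof (cases "card P \<le> m")
      case True
      then show ?thesis
        using less.prems by blast
    next
      case False
      then obtain Q where "path_partition V E Q" "meets_at_most_once Q T" "card Q = card P - 1"
        using path_partition_fewer_paths[of V E m T P] assms less.prems by fastforce
      then show ?thesis
        using less.hyps[of Q] False by simp
    qed
  qed
  moreover have "meets_at_most_once ((\<lambda>v. [v]) ` V) T"
    unfolding meets_at_most_once_def by (auto simp: card_le_Suc0_iff_eq)
  ultimately show ?thesis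
    using path_partition_singletons by blast
qed

lemma orthogonal_if_card_le:
  assumes "finite V" and "T \<subseteq> V" and "path_partition V E Q" and "meets_at_most_once Q T"
    and "card Q \<le> card T"
  shows "orthogonal Q T"
proof (rule ccontr)
  have fQ: "finite Q"
    using assms(1,3) path_partition_finite by blast
  have "card (\<Union>p\<in>Q. set p \<inter> T) = (\<Sum>p\<in>Q. card (set p \<inter> T))"
  proof (rule card_UN_disjoint[OF fQ])
    show "\<forall>p\<in>Q. finite (set p \<inter> T)"
      by simp
    show "\<forall>p\<in>Q. \<forall>q\<in>Q. p \<noteq> q \<longrightarrow> set p \<inter> T \<inter> (set q \<inter> T) = {}"
      using path_partition_disjoint[OF assms(3)] by blast
  qed
  moreover have "(\<Union>p\<in>Q. set p \<inter> T) = T"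
    using assms(2,3) unfolding path_partition_def by blast
  ultimately have card_T: "card T = (\<Sum>p\<in>Q. card (set p \<inter> T))"
    by simp
  assume "\<not> orthogonal Q T"
  then obtain p where p: "p \<in> Q" "card (set p \<inter> T) \<noteq> 1"
    unfolding orthogonal_def by blast
  moreover have "card (set p \<inter> T) \<le> 1"
    using assms(4) p(1) unfolding meets_at_most_once_def by blast
  ultimately have "card (set p \<inter> T) < 1"
    by linarith
  with p(1) fQ assms(4) have "(\<Sum>p\<in>Q. card (set p \<inter> T)) < (\<Sum>p\<in>Q. 1)"
    unfolding meets_at_most_once_def by (intro sum_strict_mono_ex1) auto
  with card_T assms(5) show False
    by simp
qed

theorem mainTheorem3:
  fixes V :: "'a set" and E :: "('a \<times> 'a) set" and T :: "'a set"
  assumes "digraph V E"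
    and "max_induced_acyclic V E T"
  shows "\<exists>P. path_partition V E P \<and> orthogonal P T"
proof -
  have V: "finite V" "\<forall>v. (v, v) \<notin> E"
    using assms(1) unfolding digraph_def by auto
  have T: "T \<subseteq> V" "acyclic (Restr E T)"
    and maximal: "\<And>S. S \<subseteq> V \<Longrightarrow> acyclic (Restr E S) \<Longrightarrow> card S \<le> card T"
    using assms(2) unfolding max_induced_acyclic_def induced_acyclic_def by auto
  have "\<exists>x\<in>S - T. \<exists>y\<in>S. (x, y) \<in> E" if "S \<subseteq> V" and "card T < card S" for S
  proof (rule not_acyclic_arc_from_outside[OF T(2)])
    show "\<not> acyclic (Restr E S)"
      using maximal[OF that(1)] that(2) by (meson leD)
  qed
  then obtain Q where "path_partition V E Q" "meets_at_most_once Q T" "card Q \<le> card T"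
    using path_partition_at_most_paths[OF V] by blast
  then show ?thesis
    using orthogonal_if_card_le[OF V(1) T(1)] by blast
qed

end
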